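(* Let $X$ be a real Banach space, $h:X\times X^*\to\mathbb{R}\cup\{\pm\infty\}$ a proper lower semicontinuous convex function, and $0\leq L\leq\infty$. 1. If $\|y^*\|\leq L$ for all $y^*\in P_1D(h^* )$, then $h(x,x^* )\leq h(z,x^* )+L\|x-z\|$ for all $x^*\in X^*$, $x,z\in X$, and $D(h)=X\times(P_2D(h))$. 2. If $\|y^{**}\|\leq L$ for all $y^{**}\in P_2D(h^* )$, then $h(x,x^* )\leq h(x,z^* )+L\|x^*-z^*\|$ for all $x^*,z^*\in X^*$, $x\in X$, and $D(h)=(P_1D(h))\times X^*$.
   Context: $P_1,P_2$ are the canonical projections of a Cartesian product onto its factors; $D(f)=\{z\;|\;f(z)<\infty\}$. $h$ is proper if $h\not\equiv+\infty$ and $h>-\infty$. The conjugate of $h$ is $h^*:X^*\times X^{**}\to\mathbb{R}\cup\{\pm\infty\}$, $h^*(x^*,x^{**})=\sup_{(y,y^* )\in X\times X^*}\langle y,x^*\rangle+\langle x^{**},y^*\rangle-h(y,y^* )$. *)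

theory Defs
  imports "HOL-Analysis.Analysis"
begin

text \<open>Dual space X* = bounded linear functionals 'a \<Rightarrow>L real, bidual X** = (X*)*.
 Functions on X \<times> X* take values in ereal (= \<real> \<union> {\<plusminus>\<infinity>}).\<close>

definition dom_e :: "('z \<Rightarrow> ereal) \<Rightarrow> 'z set" where
  "dom_e f = {z. f z < \<infinity>}"

definition proper_e :: "('z \<Rightarrow> ereal) \<Rightarrow> bool" where
  "proper_e f \<longleftrightarrow> (\<exists>z. f z \<noteq> \<infinity>) \<and> (\<forall>z. f z > -\<infinity>)"

definition convex_e :: "('z::real_vector \<Rightarrow> ereal) \<Rightarrow> bool" where
  "convex_e f \<longleftrightarrow> convex {(z, t::real). f z \<le> ereal t}"

definition lsc_e :: "('z::topological_space \<Rightarrow> ereal) \<Rightarrow> bool" where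
  "lsc_e f \<longleftrightarrow> (\<forall>t. closed {z. f z \<le> t})"

definition conj_e ::
  "('a::real_normed_vector \<times> ('a \<Rightarrow>\<^sub>L real) \<Rightarrow> ereal)
    \<Rightarrow> ('a \<Rightarrow>\<^sub>L real) \<times> (('a \<Rightarrow>\<^sub>L real) \<Rightarrow>\<^sub>L real) \<Rightarrow> ereal" where
  "conj_e h = (\<lambda>(xs, xss). SUP p \<in> UNIV.
      ereal (blinfun_apply xs (fst p) + blinfun_apply xss (snd p)) - h p)"

end

theory Submission
  imports Defs
begin

text \<open>A proper lower semicontinuous convex function h is the supremum of its continuous affine
  minorants: a point strictly below the closed convex epigraph is separated from it by a
  Hahn--Banach argument, and a vertical separating hyperplane is tilted by a non-vertical one.
  Every continuous affine minorant of h on X \<times> X* has the form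
  (x, x*) \<mapsto> y*(x) + y**(x*) - c with (y*, y**) \<in> dom h*. If all such y* have norm at most L,
  every minorant is L-Lipschitz in x, hence so is h, and finiteness of h propagates along the
  first coordinate; the second part is symmetric.\<close>

subsection \<open>Hahn--Banach extension via Zorn's lemma\<close>

definition dominated_linear_graph :: "('a::real_vector \<Rightarrow> real) \<Rightarrow> ('a \<times> real) set \<Rightarrow> bool" where
  "dominated_linear_graph p G \<longleftrightarrow>
    (0, 0) \<in> G \<and>
    (\<forall>x a y b. (x, a) \<in> G \<longrightarrow> (y, b) \<in> G \<longrightarrow> (x + y, a + b) \<in> G) \<and>
    (\<forall>x a r. (x, a) \<in> G \<longrightarrow> (r *\<^sub>R x, r * a) \<in> G) \<and>
    (\<forall>x a b. (x, a) \<in> G \<longrightarrow> (x, b) \<in> G \<longrightarrow> a = b) \<and>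
    (\<forall>x a. (x, a) \<in> G \<longrightarrow> a \<le> p x)"

lemma dominated_linear_graphD:
  assumes "dominated_linear_graph p G"
  shows dominated_linear_graph_zero: "(0, 0) \<in> G"
    and dominated_linear_graph_add: "(x, a) \<in> G \<Longrightarrow> (y, b) \<in> G \<Longrightarrow> (x + y, a + b) \<in> G"
    and dominated_linear_graph_scaleR: "(x, a) \<in> G \<Longrightarrow> (r *\<^sub>R x, r * a) \<in> G"
    and dominated_linear_graph_unique: "(x, a) \<in> G \<Longrightarrow> (x, b) \<in> G \<Longrightarrow> a = b"
    and dominated_linear_graph_le: "(x, a) \<in> G \<Longrightarrow> a \<le> p x"
  using assms unfolding dominated_linear_graph_def by blast+

lemma dominated_linear_graph_Union_chain:
  assumes chain: "C \<in> chains {G. dominated_linear_graph p G}" and "C \<noteq> {}"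
  shows "dominated_linear_graph p (\<Union>C)"
proof -
  have graph: "dominated_linear_graph p X" if "X \<in> C" for X
    using chain that unfolding chains_def by auto
  have common: "\<exists>X\<in>C. u \<in> X \<and> v \<in> X" if "u \<in> \<Union>C" "v \<in> \<Union>C" for u v
    using chain that unfolding chains_def chain_subset_def by blast
  show ?thesis
    unfolding dominated_linear_graph_def
  proof (intro conjI allI impI)
    show "(0, 0) \<in> \<Union>C"
      using \<open>C \<noteq> {}\<close> graph dominated_linear_graph_zero by blast
    show "(x + y, a + b) \<in> \<Union>C" if "(x, a) \<in> \<Union>C" "(y, b) \<in> \<Union>C" for x a y b
      using common[OF that] graph dominated_linear_graph_add by blast
    show "(r *\<^sub>R x, r * a) \<in> \<Union>C" if "(x, a) \<in> \<Union>C" for x a r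
      using that graph dominated_linear_graph_scaleR by blast
    show "a = b" if "(x, a) \<in> \<Union>C" "(x, b) \<in> \<Union>C" for x a b
      using common[OF that] graph dominated_linear_graph_unique by blast
    show "a \<le> p x" if "(x, a) \<in> \<Union>C" for x a
      using that graph dominated_linear_graph_le by blast
  qed
qed

lemma dominated_linear_graph_extension_value:
  assumes G: "dominated_linear_graph p M"
    and sub: "\<And>x y. p (x + y) \<le> p x + p y"
  shows "\<exists>c. (\<forall>m a. (m, a) \<in> M \<longrightarrow> a - p (m - x0) \<le> c \<and> c \<le> p (m + x0) - a)"
proof -
  define S where "S = {a - p (m - x0) | m a. (m, a) \<in> M}"
  have between: "a' - p (m' - x0) \<le> p (m + x0) - a" if "(m, a) \<in> M" "(m', a') \<in> M" for m a m' a'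
  proof -
    have "a + a' \<le> p (m + m')"
      using that G dominated_linear_graph_add dominated_linear_graph_le by blast
    also have "\<dots> \<le> p (m + x0) + p (m' - x0)"
      using sub[of "m + x0" "m' - x0"] by simp
    finally show ?thesis by simp
  qed
  have "S \<noteq> {}" "bdd_above S"
    using between dominated_linear_graph_zero[OF G] unfolding S_def bdd_above_def by blast+
  then have "a - p (m - x0) \<le> Sup S \<and> Sup S \<le> p (m + x0) - a" if "(m, a) \<in> M" for m a
    using that between by (auto intro!: cSup_upper cSup_least simp: S_def)
  then show ?thesis by blast
qed

lemma dominated_linear_graph_extension_le:
  assumes G: "dominated_linear_graph p M"
    and hom: "\<And>s x. s > 0 \<Longrightarrow> p (s *\<^sub>R x) = s * p x"
    and c: "\<And>m a. (m, a) \<in> M \<Longrightarrow> a - p (m - x0) \<le> c \<and> c \<le> p (m + x0) - a"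
    and "(m, a) \<in> M"
  shows "a + t * c \<le> p (m + t *\<^sub>R x0)"
proof -
  consider "t = 0" | "t > 0" | "t < 0" by linarith
  then show ?thesis
  proof cases
    case 1
    then show ?thesis using \<open>(m, a) \<in> M\<close> G dominated_linear_graph_le by simp
  next
    case 2
    have "c \<le> p ((1/t) *\<^sub>R m + x0) - (1/t) * a"
      using c dominated_linear_graph_scaleR[OF G \<open>(m, a) \<in> M\<close>] by blast
    then have "t * c \<le> t * p ((1/t) *\<^sub>R m + x0) - a"
      using 2 by (simp add: field_simps)
    also have "t * p ((1/t) *\<^sub>R m + x0) = p (m + t *\<^sub>R x0)"
      using hom[OF 2, of "(1/t) *\<^sub>R m + x0"] 2 by (simp add: scaleR_add_right)
    finally show ?thesis by simp
  next
    case 3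
    have "(-1/t) * a - p ((-1/t) *\<^sub>R m - x0) \<le> c"
      using c dominated_linear_graph_scaleR[OF G \<open>(m, a) \<in> M\<close>] by blast
    then have "a + t * c \<le> - t * p ((-1/t) *\<^sub>R m - x0)"
      using 3 by (simp add: field_simps)
    also have "- t * p ((-1/t) *\<^sub>R m - x0) = p (m + t *\<^sub>R x0)"
      using hom[of "- t" "(-1/t) *\<^sub>R m - x0"] 3 by (simp add: scaleR_diff_right)
    finally show ?thesis .
  qed
qed

lemma dominated_linear_graph_extend:
  assumes G: "dominated_linear_graph p M"
    and sub: "\<And>x y. p (x + y) \<le> p x + p y"
    and hom: "\<And>s x. s > 0 \<Longrightarrow> p (s *\<^sub>R x) = s * p x"
    and x0: "\<And>a. (x0, a) \<notin> M"
  shows "\<exists>G'. dominated_linear_graph p G' \<and> M \<subset> G'"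
proof -
  obtain c where c: "\<And>m a. (m, a) \<in> M \<Longrightarrow> a - p (m - x0) \<le> c \<and> c \<le> p (m + x0) - a"
    using dominated_linear_graph_extension_value[OF G sub] by blast
  define G' where "G' = {(m + t *\<^sub>R x0, a + t * c) | m a t. (m, a) \<in> M}"
  have G'I: "(m + t *\<^sub>R x0, a + t * c) \<in> G'" if "(m, a) \<in> M" for m a t
    using that unfolding G'_def by blast
  have "dominated_linear_graph p G'"
    unfolding dominated_linear_graph_def
  proof (intro conjI allI impI)
    show "(0, 0) \<in> G'"
      using G'I[OF dominated_linear_graph_zero[OF G], of 0] by simp
  next
    fix x a y b assume "(x, a) \<in> G'" "(y, b) \<in> G'"
    then obtain m1 a1 t1 m2 a2 t2 where "(m1, a1) \<in> M" "(m2, a2) \<in> M"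
      and "x = m1 + t1 *\<^sub>R x0" "a = a1 + t1 * c" "y = m2 + t2 *\<^sub>R x0" "b = a2 + t2 * c"
      unfolding G'_def by blast
    then show "(x + y, a + b) \<in> G'"
      using G'I[OF dominated_linear_graph_add[OF G], of m1 a1 m2 a2 "t1 + t2"]
      by (simp add: algebra_simps)
  next
    fix x a r assume "(x, a) \<in> G'"
    then obtain m a1 t where "(m, a1) \<in> M" "x = m + t *\<^sub>R x0" "a = a1 + t * c"
      unfolding G'_def by blast
    then show "(r *\<^sub>R x, r * a) \<in> G'"
      using G'I[OF dominated_linear_graph_scaleR[OF G], of m a1 r "r * t"]
      by (simp add: algebra_simps)
  next
    fix x a b assume "(x, a) \<in> G'" "(x, b) \<in> G'"
    then obtain m1 a1 t1 m2 a2 t2 where m: "(m1, a1) \<in> M" "(m2, a2) \<in> M"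
      and x: "x = m1 + t1 *\<^sub>R x0" "x = m2 + t2 *\<^sub>R x0" and "a = a1 + t1 * c" "b = a2 + t2 * c"
      unfolding G'_def by blast
    have "t1 = t2"
    proof (rule ccontr)
      assume "t1 \<noteq> t2"
      have "(m2 + (-1) *\<^sub>R m1, a2 + (-1) * a1) \<in> M"
        using dominated_linear_graph_add[OF G m(2) dominated_linear_graph_scaleR[OF G m(1)]] .
      from dominated_linear_graph_scaleR[OF G this, of "1 / (t1 - t2)"]
      have "((1 / (t1 - t2)) *\<^sub>R (m2 - m1), (a2 - a1) / (t1 - t2)) \<in> M" by simp
      moreover have "m2 - m1 = (t1 - t2) *\<^sub>R x0"
        using x by (simp add: algebra_simps)
      ultimately show False
        using x0 \<open>t1 \<noteq> t2\<close> by simp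
    qed
    moreover have "a1 = a2"
      using m x \<open>t1 = t2\<close> dominated_linear_graph_unique[OF G, of m1 a1 a2] by simp
    ultimately show "a = b"
      using \<open>a = _\<close> \<open>b = _\<close> by simp
  next
    fix x a assume "(x, a) \<in> G'"
    then obtain m a1 t where "(m, a1) \<in> M" "x = m + t *\<^sub>R x0" "a = a1 + t * c"
      unfolding G'_def by blast
    then show "a \<le> p x"
      using dominated_linear_graph_extension_le[OF G hom c] by blast
  qed
  moreover have "M \<subset> G'"
  proof
    show "M \<subseteq> G'"
      using G'I[of _ _ 0] by force
    show "M \<noteq> G'"
      using G'I[OF dominated_linear_graph_zero[OF G], of 1] x0 by auto
  qed
  ultimately show ?thesis by blast
qed

theorem sublinear_dominated_linear_exists:
  fixes p :: "'a::real_vector \<Rightarrow> real"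
  assumes sub: "\<And>x y. p (x + y) \<le> p x + p y"
    and hom: "\<And>s x. s > 0 \<Longrightarrow> p (s *\<^sub>R x) = s * p x"
  shows "\<exists>F. linear F \<and> (\<forall>x. F x \<le> p x)"
proof -
  have "p 0 = 0"
    using hom[of 2 0] by simp
  then have "dominated_linear_graph p {(0, 0)}"
    unfolding dominated_linear_graph_def by simp
  then have "\<exists>U\<in>{G. dominated_linear_graph p G}. \<forall>X\<in>C. X \<subseteq> U"
    if "C \<in> chains {G. dominated_linear_graph p G}" for C
    using dominated_linear_graph_Union_chain[OF that] by (cases "C = {}") auto
  then have "\<exists>M\<in>{G. dominated_linear_graph p G}. \<forall>G\<in>{G. dominated_linear_graph p G}. M \<subseteq> G \<longrightarrow> G = M"
    by (intro Zorn_Lemma2 ballI)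
  then obtain M where M: "dominated_linear_graph p M"
    and max: "\<And>G. dominated_linear_graph p G \<Longrightarrow> M \<subseteq> G \<Longrightarrow> G = M"
    by auto
  have "\<exists>a. (x, a) \<in> M" for x
  proof (rule ccontr)
    assume "\<nexists>a. (x, a) \<in> M"
    then obtain G where "dominated_linear_graph p G" "M \<subset> G"
      using dominated_linear_graph_extend[OF M sub hom, of x] by blast
    then show False
      using max by blast
  qed
  then have unique: "\<exists>!a. (x, a) \<in> M" for x
    using dominated_linear_graph_unique[OF M] by blast
  define F where "F x = (THE a. (x, a) \<in> M)" for x
  have graph: "(x, F x) \<in> M" for x
    unfolding F_def using unique by (rule theI')
  have F_eq: "F x = a" if "(x, a) \<in> M" for x a
    using graph that dominated_linear_graph_unique[OF M] by blast
  have "linear F"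
  proof (rule linearI)
    show "F (x + y) = F x + F y" for x y
      using F_eq dominated_linear_graph_add[OF M graph graph] .
    show "F (r *\<^sub>R x) = r *\<^sub>R F x" for r x
      using F_eq[OF dominated_linear_graph_scaleR[OF M graph]] by simp
  qed
  moreover have "F x \<le> p x" for x
    using dominated_linear_graph_le[OF M graph] .
  ultimately show ?thesis by blast
qed

subsection \<open>Separating a convex set from a ball\<close>

text \<open>If D is convex and avoids the ball of radius \<delta> around 0, this gauge is sublinear and
  bounded by the norm, and a linear functional below it is \<ge> \<delta> on D because
  the gauge of -d is at most -\<delta> for d \<in> D.\<close>

definition separation_gauge :: "'a::real_normed_vector set \<Rightarrow> real \<Rightarrow> 'a \<Rightarrow> real" where
  "separation_gauge D \<delta> x = Inf {norm (x + t *\<^sub>R d) - t * \<delta> | t d. 0 \<le> t \<and> d \<in> D}"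

context
  fixes D :: "'a::real_normed_vector set" and \<delta> :: real
  assumes nonempty: "D \<noteq> {}" and far: "\<And>d. d \<in> D \<Longrightarrow> \<delta> \<le> norm d"
begin

private abbreviation "gauge_set x \<equiv> {norm (x + t *\<^sub>R d) - t * \<delta> | t d. 0 \<le> t \<and> d \<in> D}"

private lemma gauge_set_bdd_below: "bdd_below (gauge_set x)"
proof -
  have "- norm x \<le> norm (x + t *\<^sub>R d) - t * \<delta>" if "0 \<le> t" "d \<in> D" for t d
  proof -
    have "t * \<delta> \<le> norm (t *\<^sub>R d)"
      using that far[of d] by (simp add: mult_left_mono)
    also have "\<dots> \<le> norm (x + t *\<^sub>R d) + norm x"
      using norm_triangle_ineq4[of "x + t *\<^sub>R d" x] by simp
    finally show ?thesis by simp
  qed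
  then show ?thesis
    unfolding bdd_below_def by blast
qed

lemma separation_gauge_le:
  "0 \<le> t \<Longrightarrow> d \<in> D \<Longrightarrow> separation_gauge D \<delta> x \<le> norm (x + t *\<^sub>R d) - t * \<delta>"
  unfolding separation_gauge_def using gauge_set_bdd_below by (auto intro!: cInf_lower)

lemma separation_gauge_greatest:
  "(\<And>t d. 0 \<le> t \<Longrightarrow> d \<in> D \<Longrightarrow> b \<le> norm (x + t *\<^sub>R d) - t * \<delta>) \<Longrightarrow>
    b \<le> separation_gauge D \<delta> x"
proof -
  assume bound: "\<And>t d. 0 \<le> t \<Longrightarrow> d \<in> D \<Longrightarrow> b \<le> norm (x + t *\<^sub>R d) - t * \<delta>"
  have "gauge_set x \<noteq> {}"
    using nonempty by blast
  then show ?thesis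
    unfolding separation_gauge_def using bound by (auto intro!: cInf_greatest)
qed

lemma separation_gauge_le_norm: "separation_gauge D \<delta> x \<le> norm x"
proof -
  obtain d where "d \<in> D"
    using nonempty by blast
  then show ?thesis
    using separation_gauge_le[of 0 d x] by simp
qed

lemma separation_gauge_scaleR_le:
  assumes "s > 0"
  shows "separation_gauge D \<delta> (s *\<^sub>R x) \<le> s * separation_gauge D \<delta> x"
proof -
  have "separation_gauge D \<delta> (s *\<^sub>R x) / s \<le> norm (x + t *\<^sub>R d) - t * \<delta>"
    if "0 \<le> t" "d \<in> D" for t d
  proof -
    have "separation_gauge D \<delta> (s *\<^sub>R x) \<le> norm (s *\<^sub>R x + (s * t) *\<^sub>R d) - (s * t) * \<delta>"
      using separation_gauge_le that \<open>s > 0\<close> by simp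
    also have "\<dots> = norm (s *\<^sub>R (x + t *\<^sub>R d)) - (s * t) * \<delta>"
      by (simp add: scaleR_add_right)
    also have "\<dots> = s * (norm (x + t *\<^sub>R d) - t * \<delta>)"
      using \<open>s > 0\<close> by (simp add: right_diff_distrib)
    finally show ?thesis
      using \<open>s > 0\<close> by (simp add: divide_le_eq mult.commute)
  qed
  then have "separation_gauge D \<delta> (s *\<^sub>R x) / s \<le> separation_gauge D \<delta> x"
    by (rule separation_gauge_greatest)
  then show ?thesis
    using \<open>s > 0\<close> by (simp add: divide_le_eq mult.commute)
qed

lemma separation_gauge_scaleR:
  assumes "s > 0"
  shows "separation_gauge D \<delta> (s *\<^sub>R x) = s * separation_gauge D \<delta> x"
proof -
  have "separation_gauge D \<delta> x \<le> (1 / s) * separation_gauge D \<delta> (s *\<^sub>R x)"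
    using separation_gauge_scaleR_le[of "1 / s" "s *\<^sub>R x"] \<open>s > 0\<close> by simp
  then show ?thesis
    using separation_gauge_scaleR_le[OF \<open>s > 0\<close>, of x] \<open>s > 0\<close> by (simp add: field_simps)
qed

lemma separation_gauge_add:
  assumes "convex D"
  shows "separation_gauge D \<delta> (x + y) \<le> separation_gauge D \<delta> x + separation_gauge D \<delta> y"
proof -
  have sum_le: "separation_gauge D \<delta> (x + y) \<le> (norm (x + t1 *\<^sub>R d1) - t1 * \<delta>) + (norm (y + t2 *\<^sub>R d2) - t2 * \<delta>)"
    if t: "0 \<le> t1" "0 \<le> t2" and d: "d1 \<in> D" "d2 \<in> D" for t1 t2 d1 d2
  proof (cases "t1 + t2 = 0")
    case True
    with t have "t1 = 0" "t2 = 0" by auto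
    then show ?thesis
      using separation_gauge_le_norm[of "x + y"] norm_triangle_ineq[of x y] by simp
  next
    case False
    define T where "T = t1 + t2"
    have "T > 0"
      using False t unfolding T_def by simp
    define d where "d = (t1 / T) *\<^sub>R d1 + (t2 / T) *\<^sub>R d2"
    have "d \<in> D"
      unfolding d_def using convexD[OF assms d, of "t1 / T" "t2 / T"] t \<open>T > 0\<close>
      by (simp add: T_def flip: add_divide_distrib)
    have combine: "x + y + T *\<^sub>R d = (x + t1 *\<^sub>R d1) + (y + t2 *\<^sub>R d2)"
      using \<open>T > 0\<close> by (simp add: d_def scaleR_add_right algebra_simps)
    have "separation_gauge D \<delta> (x + y) \<le> norm (x + y + T *\<^sub>R d) - T * \<delta>"
      using separation_gauge_le[OF _ \<open>d \<in> D\<close>, of T "x + y"] \<open>T > 0\<close> by simp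
    also have "\<dots> = norm ((x + t1 *\<^sub>R d1) + (y + t2 *\<^sub>R d2)) - T * \<delta>"
      unfolding combine ..
    also have "\<dots> \<le> (norm (x + t1 *\<^sub>R d1) - t1 * \<delta>) + (norm (y + t2 *\<^sub>R d2) - t2 * \<delta>)"
    proof -
      have "T * \<delta> = t1 * \<delta> + t2 * \<delta>"
        unfolding T_def by (rule distrib_right)
      with norm_triangle_ineq[of "x + t1 *\<^sub>R d1" "y + t2 *\<^sub>R d2"] show ?thesis
        by linarith
    qed
    finally show ?thesis .
  qed
  have "separation_gauge D \<delta> (x + y) - separation_gauge D \<delta> x \<le> norm (y + t2 *\<^sub>R d2) - t2 * \<delta>"
    if t2: "0 \<le> t2" "d2 \<in> D" for t2 d2
  proof -
    have "separation_gauge D \<delta> (x + y) - (norm (y + t2 *\<^sub>R d2) - t2 * \<delta>) \<le> separation_gauge D \<delta> x"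
    proof (rule separation_gauge_greatest)
      fix t1 :: real and d1 assume "0 \<le> t1" "d1 \<in> D"
      from sum_le[OF this(1) t2(1) this(2) t2(2)]
      show "separation_gauge D \<delta> (x + y) - (norm (y + t2 *\<^sub>R d2) - t2 * \<delta>) \<le> norm (x + t1 *\<^sub>R d1) - t1 * \<delta>"
        by linarith
    qed
    then show ?thesis by linarith
  qed
  then have "separation_gauge D \<delta> (x + y) - separation_gauge D \<delta> x \<le> separation_gauge D \<delta> y"
    by (rule separation_gauge_greatest)
  then show ?thesis by linarith
qed

lemma bounded_linear_separation:
  assumes "convex D"
  shows "\<exists>F. bounded_linear F \<and> (\<forall>d\<in>D. \<delta> \<le> F d)"
proof -
  have "\<exists>F. linear F \<and> (\<forall>x. F x \<le> separation_gauge D \<delta> x)"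
    by (rule sublinear_dominated_linear_exists[of "separation_gauge D \<delta>",
          OF separation_gauge_add[OF assms] separation_gauge_scaleR])
  then obtain F where "linear F" and F_le: "\<And>x. F x \<le> separation_gauge D \<delta> x"
    by blast
  have F_neg: "F (- x) = - F x" for x
    using linear_neg[OF \<open>linear F\<close>] .
  have "bounded_linear F"
  proof (rule bounded_linear_intro[where K = 1])
    show "F (x + y) = F x + F y" "F (r *\<^sub>R x) = r *\<^sub>R F x" for x y r
      using \<open>linear F\<close> by (simp_all add: linear_add linear_scale)
    fix x
    have "F x \<le> norm x" "F (- x) \<le> norm x"
      using F_le[of x] F_le[of "- x"] separation_gauge_le_norm[of x] separation_gauge_le_norm[of "- x"]
      by simp_all
    then show "norm (F x) \<le> norm x * 1"
      unfolding F_neg by simp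
  qed
  moreover have "\<delta> \<le> F d" if "d \<in> D" for d
  proof -
    have "F (- d) \<le> norm (- d + 1 *\<^sub>R d) - 1 * \<delta>"
      using F_le[of "- d"] separation_gauge_le[OF _ that, of 1 "- d"] by linarith
    then show ?thesis
      unfolding F_neg by simp
  qed
  ultimately show ?thesis by blast
qed

end

subsection \<open>Continuous affine minorants\<close>

lemma proper_e_not_MInf: "proper_e h \<Longrightarrow> h z \<noteq> -\<infinity>"
  unfolding proper_e_def by force

lemma proper_e_finite_value:
  assumes "proper_e h"
  obtains z r where "h z = ereal r"
proof -
  obtain z where "h z \<noteq> \<infinity>"
    using assms unfolding proper_e_def by blast
  with proper_e_not_MInf[OF assms, of z] show ?thesis
    using that by (cases "h z") auto
qed

lemma lsc_e_open_Compl_epigraph: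
  assumes "lsc_e h"
  shows "open (- {(z, t::real). h z \<le> ereal t})"
proof (rule open_prod_intro)
  fix q assume "q \<in> - {(z, t::real). h z \<le> ereal t}"
  then obtain u s where q: "q = (u, s)" "ereal s < h u"
    by (cases q) auto
  then obtain r where r: "s < r" "ereal r < h u"
    using ereal_dense2 by (metis less_ereal.simps(1))
  have "open (- {z. h z \<le> ereal r})"
    using assms unfolding lsc_e_def by auto
  moreover have "q \<in> (- {z. h z \<le> ereal r}) \<times> {..<r}"
    using q r by auto
  moreover have "(- {z. h z \<le> ereal r}) \<times> {..<r} \<subseteq> - {(z, t). h z \<le> ereal t}"
    by (auto intro: order_trans[of _ "ereal _" "ereal r"])
  ultimately show "\<exists>A B. open A \<and> open B \<and> q \<in> A \<times> B \<and> A \<times> B \<subseteq> - {(z, t). h z \<le> ereal t}"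
    using open_lessThan by blast
qed

lemma bounded_linear_Pair_real_split:
  fixes F :: "'a::real_normed_vector \<times> real \<Rightarrow> real"
  assumes "bounded_linear F"
  shows "bounded_linear (\<lambda>u. F (u, 0))"
    and "F (u, s) = F (u, 0) + s * F (0, 1)"
proof -
  show "bounded_linear (\<lambda>u. F (u, 0))"
    using bounded_linear_compose[OF assms bounded_linear_Pair[OF bounded_linear_ident bounded_linear_zero]] .
  have lin: "linear F"
    using assms by (rule bounded_linear.linear)
  have "F (u, s) = F ((u, 0) + s *\<^sub>R (0, 1))"
    by simp
  also have "\<dots> = F (u, 0) + s * F (0, 1)"
    by (simp only: linear_add[OF lin] linear_scale[OF lin] real_scaleR_def)
  finally show "F (u, s) = F (u, 0) + s * F (0, 1)" .
qed

lemma epigraph_separation: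
  fixes h :: "'w::real_normed_vector \<Rightarrow> ereal"
  assumes "proper_e h" "lsc_e h" "convex_e h" and "ereal t < h w"
  shows "\<exists>\<phi> \<beta> \<epsilon>. bounded_linear \<phi> \<and> \<epsilon> > 0 \<and> \<beta> \<ge> 0 \<and>
           (\<forall>u s. h u \<le> ereal s \<longrightarrow> \<phi> w + \<beta> * t + \<epsilon> \<le> \<phi> u + \<beta> * s)"
proof -
  define E where "E = {(z, t::real). h z \<le> ereal t}"
  have "(w, t) \<in> - E"
    using assms(4) unfolding E_def by auto
  then obtain \<epsilon> where "\<epsilon> > 0" and ball: "ball (w, t) \<epsilon> \<subseteq> - E"
    using lsc_e_open_Compl_epigraph[OF assms(2)] open_contains_ball unfolding E_def by blast
  obtain u0 r0 where r0: "h u0 = ereal r0"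
    using proper_e_finite_value[OF assms(1)] .
  define D where "D = (\<lambda>e. e - (w, t)) ` E"
  have "convex D"
    unfolding D_def using assms(3) unfolding convex_e_def E_def by (rule convex_translation_subtract)
  have "(u0, r0) \<in> E"
    using r0 unfolding E_def by simp
  then have "D \<noteq> {}"
    unfolding D_def by blast
  have far: "\<epsilon> \<le> norm d" if d: "d \<in> D" for d
  proof -
    obtain e where "e \<in> E" "d = e - (w, t)"
      using d unfolding D_def by blast
    then have "e \<notin> ball (w, t) \<epsilon>"
      using ball by blast
    then show ?thesis
      using \<open>d = e - (w, t)\<close> by (simp add: dist_norm norm_minus_commute)
  qed
  obtain F where F: "bounded_linear F" and F_ge: "\<forall>d\<in>D. \<epsilon> \<le> F d"
    using bounded_linear_separation[OF \<open>D \<noteq> {}\<close> far \<open>convex D\<close>] by blast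
  define \<phi> where "\<phi> u = F (u, 0)" for u
  define \<beta> where "\<beta> = F (0, 1)"
  have "bounded_linear \<phi>"
    unfolding \<phi>_def by (rule bounded_linear_Pair_real_split(1)[OF F])
  have F_split: "F (u, s) = \<phi> u + s * \<beta>" for u s
    unfolding \<phi>_def \<beta>_def by (rule bounded_linear_Pair_real_split(2)[OF F])
  have key: "\<phi> w + \<beta> * t + \<epsilon> \<le> \<phi> u + \<beta> * s" if "h u \<le> ereal s" for u s
  proof -
    have "\<epsilon> \<le> F ((u, s) - (w, t))"
      using F_ge that unfolding D_def E_def by auto
    also have "\<dots> = F (u, s) - F (w, t)"
      by (rule linear_diff[OF bounded_linear.linear[OF F]])
    finally show ?thesis
      unfolding F_split by (simp add: algebra_simps)
  qed
  have "\<beta> \<ge> 0"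
  proof (rule ccontr)
    assume "\<not> \<beta> \<ge> 0"
    \<comment> \<open>(u0, s) lies in the epigraph for every s \<ge> r0, but \<beta> * s \<rightarrow> -\<infinity>\<close>
    define s where "s = r0 + \<bar>\<phi> w + \<beta> * t + \<epsilon> - \<phi> u0 - \<beta> * r0\<bar> / (- \<beta>) + 1"
    have "r0 \<le> s"
      unfolding s_def using \<open>\<not> \<beta> \<ge> 0\<close> by (simp add: divide_nonneg_pos)
    then have "\<phi> w + \<beta> * t + \<epsilon> \<le> \<phi> u0 + \<beta> * s"
      using key r0 by simp
    moreover have "\<beta> * s = \<beta> * r0 - \<bar>\<phi> w + \<beta> * t + \<epsilon> - \<phi> u0 - \<beta> * r0\<bar> + \<beta>"
      unfolding s_def using \<open>\<not> \<beta> \<ge> 0\<close> by (simp add: field_simps)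
    ultimately show False
      using \<open>\<not> \<beta> \<ge> 0\<close> by linarith
  qed
  with \<open>bounded_linear \<phi>\<close> \<open>\<epsilon> > 0\<close> key show ?thesis by blast
qed

lemma affine_minorant_from_separation:
  fixes h :: "'w::real_normed_vector \<Rightarrow> ereal"
  assumes "bounded_linear \<phi>" and "\<beta> > 0" and "\<epsilon> > 0"
    and sep: "\<And>u s. h u \<le> ereal s \<Longrightarrow> \<phi> w + \<beta> * t + \<epsilon> \<le> \<phi> u + \<beta> * s"
    and not_MInf: "\<And>u. h u \<noteq> -\<infinity>"
  shows "\<exists>\<psi> c. bounded_linear \<psi> \<and> (\<forall>u. ereal (\<psi> u - c) \<le> h u) \<and> t < \<psi> w - c"
proof -
  define \<psi> where "\<psi> u = - \<phi> u / \<beta>" for u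
  define c where "c = - (\<phi> w + \<beta> * t + \<epsilon>) / \<beta>"
  have "bounded_linear \<psi>"
    unfolding \<psi>_def using bounded_linear_compose[OF bounded_linear_divide bounded_linear_minus[OF assms(1)]] .
  moreover have "ereal (\<psi> u - c) \<le> h u" for u
  proof (cases "h u")
    case (real s)
    then have "\<phi> w + \<beta> * t + \<epsilon> \<le> \<phi> u + \<beta> * s"
      using sep by simp
    then have "\<psi> u - c \<le> s"
      unfolding \<psi>_def c_def using \<open>\<beta> > 0\<close> by (simp add: field_simps)
    then show ?thesis
      using real by simp
  qed (use not_MInf in auto)
  moreover have "t < \<psi> w - c"
    unfolding \<psi>_def c_def using \<open>\<beta> > 0\<close> \<open>\<epsilon> > 0\<close> by (simp add: field_simps)
  ultimately show ?thesis by blast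
qed

lemma affine_minorant_above:
  fixes h :: "'w::real_normed_vector \<Rightarrow> ereal"
  assumes "proper_e h" "lsc_e h" "convex_e h" and "ereal t < h w"
  shows "\<exists>\<psi> c. bounded_linear \<psi> \<and> (\<forall>u. ereal (\<psi> u - c) \<le> h u) \<and> t < \<psi> w - c"
proof -
  have not_MInf: "\<And>u. h u \<noteq> -\<infinity>"
    using proper_e_not_MInf[OF assms(1)] .
  obtain \<phi> \<beta> \<epsilon> where "bounded_linear \<phi>" "\<epsilon> > 0" "\<beta> \<ge> 0"
    and sep: "\<And>u s. h u \<le> ereal s \<Longrightarrow> \<phi> w + \<beta> * t + \<epsilon> \<le> \<phi> u + \<beta> * s"
    using epigraph_separation[OF assms] by blast
  show ?thesis
  proof (cases "\<beta> > 0")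
    case True
    show ?thesis
      by (rule affine_minorant_from_separation[where h = h, OF \<open>bounded_linear \<phi>\<close> True \<open>\<epsilon> > 0\<close> sep not_MInf])
  next
    case False
    \<comment> \<open>A vertical separating hyperplane: tilt some affine minorant by a large multiple of \<phi>.\<close>
    then have sep0: "\<phi> w + \<epsilon> \<le> \<phi> u" if "h u \<le> ereal s" for u s
      using sep[OF that] \<open>\<beta> \<ge> 0\<close> by simp
    obtain u0 r0 where r0: "h u0 = ereal r0"
      using proper_e_finite_value[OF assms(1)] .
    then have "ereal (r0 - 1) < h u0"
      by simp
    then obtain \<phi>0 \<beta>0 \<epsilon>0 where "bounded_linear \<phi>0" "\<epsilon>0 > 0"
      and sep': "\<And>u s. h u \<le> ereal s \<Longrightarrow> \<phi>0 u0 + \<beta>0 * (r0 - 1) + \<epsilon>0 \<le> \<phi>0 u + \<beta>0 * s"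
      using epigraph_separation[OF assms(1-3)] by blast
    have "\<beta>0 > 0"
      using sep'[of u0 r0] r0 \<open>\<epsilon>0 > 0\<close> by (simp add: algebra_simps)
    obtain \<psi>0 c0 where "bounded_linear \<psi>0" and minor0: "\<And>u. ereal (\<psi>0 u - c0) \<le> h u"
      using affine_minorant_from_separation[where h = h and w = u0 and t = "r0 - 1",
          OF \<open>bounded_linear \<phi>0\<close> \<open>\<beta>0 > 0\<close> \<open>\<epsilon>0 > 0\<close> sep' not_MInf]
      by blast
    define k where "k = max 0 ((t - (\<psi>0 w - c0)) / \<epsilon> + 1)"
    define \<psi> where "\<psi> u = \<psi>0 u - k * \<phi> u" for u
    define c where "c = c0 - k * (\<phi> w + \<epsilon>)"
    have "bounded_linear \<psi>"
      unfolding \<psi>_def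
      using bounded_linear_sub[OF \<open>bounded_linear \<psi>0\<close> bounded_linear_compose[OF bounded_linear_mult_right \<open>bounded_linear \<phi>\<close>]] .
    moreover have "ereal (\<psi> u - c) \<le> h u" for u
    proof (cases "h u")
      case (real s)
      then have "k * (\<phi> w + \<epsilon> - \<phi> u) \<le> 0"
        using sep0[of u s] by (simp add: k_def mult_nonneg_nonpos)
      moreover have "\<psi>0 u - c0 \<le> s"
        using minor0[of u] real by simp
      ultimately show ?thesis
        using real unfolding \<psi>_def c_def by (simp add: algebra_simps)
    qed (use not_MInf in auto)
    moreover have "t < \<psi> w - c"
    proof -
      have "(t - (\<psi>0 w - c0)) / \<epsilon> + 1 \<le> k"
        unfolding k_def by simp
      then have "t - (\<psi>0 w - c0) + \<epsilon> \<le> k * \<epsilon>"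
        using \<open>\<epsilon> > 0\<close> by (simp add: field_simps)
      then show ?thesis
        unfolding \<psi>_def c_def using \<open>\<epsilon> > 0\<close> by (simp add: algebra_simps)
    qed
    ultimately show ?thesis by blast
  qed
qed

subsection \<open>Lipschitz bounds from the domain of the conjugate\<close>

lemma affine_minorant_in_dom_conj_e:
  fixes h :: "'a::real_normed_vector \<times> ('a \<Rightarrow>\<^sub>L real) \<Rightarrow> ereal"
  assumes "bounded_linear \<psi>" and minor: "\<forall>u. ereal (\<psi> u - c) \<le> h u"
  shows "\<exists>ys yss. (ys, yss) \<in> dom_e (conj_e h) \<and>
           (\<forall>x xs. \<psi> (x, xs) = blinfun_apply ys x + blinfun_apply yss xs)"
proof -
  define ys where "ys = Blinfun (\<lambda>x. \<psi> (x, 0))"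
  define yss where "yss = Blinfun (\<lambda>xs. \<psi> (0, xs))"
  have "bounded_linear (\<lambda>x. \<psi> (x, 0))" "bounded_linear (\<lambda>xs. \<psi> (0, xs))"
    using bounded_linear_compose[OF assms(1) bounded_linear_Pair[OF bounded_linear_ident bounded_linear_zero]]
      bounded_linear_compose[OF assms(1) bounded_linear_Pair[OF bounded_linear_zero bounded_linear_ident]]
    by simp_all
  then have apply_ys: "blinfun_apply ys x = \<psi> (x, 0)" and apply_yss: "blinfun_apply yss xs = \<psi> (0, xs)"
    for x xs
    unfolding ys_def yss_def by (simp_all add: bounded_linear_Blinfun_apply)
  have split: "\<psi> (x, xs) = blinfun_apply ys x + blinfun_apply yss xs" for x xs
  proof -
    have "\<psi> (x, xs) = \<psi> ((x, 0) + (0, xs))"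
      by simp
    also have "\<dots> = \<psi> (x, 0) + \<psi> (0, xs)"
      by (rule linear_add[OF bounded_linear.linear[OF assms(1)]])
    finally show ?thesis
      by (simp add: apply_ys apply_yss)
  qed
  have "ereal (\<psi> p) - h p \<le> ereal c" for p
  proof (cases "h p")
    case (real r)
    then show ?thesis
      using minor[rule_format, of p] by simp
  qed (use minor[rule_format, of p] in auto)
  then have "conj_e h (ys, yss) \<le> ereal c"
    unfolding conj_e_def using split by (auto intro!: SUP_least)
  then have "(ys, yss) \<in> dom_e (conj_e h)"
    unfolding dom_e_def using order_le_less_trans[of _ "ereal c" \<infinity>] by simp
  with split show ?thesis by blast
qed

lemma le_add_if_affine_minorants_le:
  fixes h :: "'w::real_normed_vector \<Rightarrow> ereal"
  assumes "proper_e h" "lsc_e h" "convex_e h"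
    and bound: "\<And>\<psi> c. bounded_linear \<psi> \<Longrightarrow> \<forall>u. ereal (\<psi> u - c) \<le> h u \<Longrightarrow> \<psi> w1 - \<psi> w2 \<le> K"
  shows "h w1 \<le> h w2 + ereal K"
proof (rule ccontr)
  assume "\<not> h w1 \<le> h w2 + ereal K"
  then have "h w2 \<noteq> \<infinity>"
    by auto
  moreover have "h w2 \<noteq> -\<infinity>"
    using proper_e_not_MInf[OF assms(1)] .
  ultimately obtain a where a: "h w2 = ereal a"
    by (cases "h w2") auto
  with \<open>\<not> h w1 \<le> h w2 + ereal K\<close> have "ereal (a + K) < h w1"
    by simp
  then obtain \<psi> c where "bounded_linear \<psi>" and minor: "\<forall>u. ereal (\<psi> u - c) \<le> h u"
    and "a + K < \<psi> w1 - c"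
    using affine_minorant_above[OF assms(1-3)] by blast
  moreover have "\<psi> w2 - c \<le> a"
    using minor a by (metis ereal_less_eq(3))
  ultimately show False
    using bound by fastforce
qed

lemma le_add_mult_if_conj_dom_le:
  fixes h :: "'a::real_normed_vector \<times> ('a \<Rightarrow>\<^sub>L real) \<Rightarrow> ereal"
  assumes "proper_e h" "lsc_e h" "convex_e h" and "0 \<le> L" "0 \<le> r"
    and bound: "\<And>ys yss. (ys, yss) \<in> dom_e (conj_e h) \<Longrightarrow>
      ereal (blinfun_apply ys (fst w1 - fst w2) + blinfun_apply yss (snd w1 - snd w2)) \<le> L * ereal r"
  shows "h w1 \<le> h w2 + L * ereal r"
proof (cases "L * ereal r = \<infinity>")
  case True
  moreover have "h w2 \<noteq> -\<infinity>"
    using proper_e_not_MInf[OF assms(1)] .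
  ultimately have sum: "h w2 + L * ereal r = \<infinity>"
    by (cases "h w2") simp_all
  show ?thesis
    unfolding sum by simp
next
  case False
  moreover have "0 \<le> L * ereal r"
    using assms(4,5) by simp
  ultimately obtain K where K: "L * ereal r = ereal K"
    by (cases "L * ereal r") auto
  have "h w1 \<le> h w2 + ereal K"
  proof (rule le_add_if_affine_minorants_le[OF assms(1-3)])
    fix \<psi> c assume "bounded_linear \<psi>" "\<forall>u. ereal (\<psi> u - c) \<le> h u"
    then obtain ys yss where "(ys, yss) \<in> dom_e (conj_e h)"
      and split: "\<And>x xs. \<psi> (x, xs) = blinfun_apply ys x + blinfun_apply yss xs"
      using affine_minorant_in_dom_conj_e by blast
    have "\<psi> w1 - \<psi> w2 = blinfun_apply ys (fst w1 - fst w2) + blinfun_apply yss (snd w1 - snd w2)"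
      using split[of "fst w1" "snd w1"] split[of "fst w2" "snd w2"]
      by (simp add: blinfun.diff_right)
    then show "\<psi> w1 - \<psi> w2 \<le> K"
      using bound[OF \<open>(ys, yss) \<in> dom_e (conj_e h)\<close>] K by simp
  qed
  with K show ?thesis by simp
qed

lemma blinfun_apply_le_mult_bound:
  fixes f :: "'a::real_normed_vector \<Rightarrow>\<^sub>L real"
  assumes "ereal (norm f) \<le> L"
  shows "ereal (blinfun_apply f x) \<le> L * ereal (norm x)"
proof -
  have "blinfun_apply f x \<le> norm f * norm x"
    using norm_blinfun[of f x] by simp
  then have "ereal (blinfun_apply f x) \<le> ereal (norm f) * ereal (norm x)"
    by simp
  also have "\<dots> \<le> L * ereal (norm x)"
    using assms by (rule ereal_mult_right_mono) simp
  finally show ?thesis .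
qed

lemma Lipschitz_fst_if_conj_dom_fst_bounded:
  fixes h :: "'a::real_normed_vector \<times> ('a \<Rightarrow>\<^sub>L real) \<Rightarrow> ereal"
  assumes "proper_e h" "lsc_e h" "convex_e h" "0 \<le> L"
    and bounded: "\<forall>ys \<in> fst ` dom_e (conj_e h). ereal (norm ys) \<le> L"
  shows "h (x, xs) \<le> h (z, xs) + L * ereal (norm (x - z))"
proof (rule le_add_mult_if_conj_dom_le[OF assms(1-4) norm_ge_zero])
  fix ys yss assume "(ys, yss) \<in> dom_e (conj_e h)"
  then have "ys \<in> fst ` dom_e (conj_e h)"
    by (rule rev_image_eqI) simp
  then have "ereal (norm ys) \<le> L"
    using bounded by blast
  then show "ereal (blinfun_apply ys (fst (x, xs) - fst (z, xs)) + blinfun_apply yss (snd (x, xs) - snd (z, xs)))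
      \<le> L * ereal (norm (x - z))"
    using blinfun_apply_le_mult_bound[of ys L "x - z"] by simp
qed

lemma Lipschitz_snd_if_conj_dom_snd_bounded:
  fixes h :: "'a::real_normed_vector \<times> ('a \<Rightarrow>\<^sub>L real) \<Rightarrow> ereal"
  assumes "proper_e h" "lsc_e h" "convex_e h" "0 \<le> L"
    and bounded: "\<forall>yss \<in> snd ` dom_e (conj_e h). ereal (norm yss) \<le> L"
  shows "h (x, xs) \<le> h (x, zs) + L * ereal (norm (xs - zs))"
proof (rule le_add_mult_if_conj_dom_le[OF assms(1-4) norm_ge_zero])
  fix ys yss assume "(ys, yss) \<in> dom_e (conj_e h)"
  then have "yss \<in> snd ` dom_e (conj_e h)"
    by (rule rev_image_eqI) simp
  then have "ereal (norm yss) \<le> L"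
    using bounded by blast
  then show "ereal (blinfun_apply ys (fst (x, xs) - fst (x, zs)) + blinfun_apply yss (snd (x, xs) - snd (x, zs)))
      \<le> L * ereal (norm (xs - zs))"
    using blinfun_apply_le_mult_bound[of yss L "xs - zs"] by simp
qed

lemma dom_e_le_add_mult:
  assumes "h u \<le> h v + L * ereal r" and "v \<in> dom_e h" and "0 \<le> L" "L < \<infinity>"
  shows "u \<in> dom_e h"
proof -
  obtain l where "L = ereal l"
    using assms(3,4) by (cases L) auto
  moreover have "h v < \<infinity>"
    using assms(2) unfolding dom_e_def by simp
  ultimately have "h v + L * ereal r < \<infinity>"
    by (cases "h v") simp_all
  with assms(1) have "h u < \<infinity>"
    by (rule order_le_less_trans)
  then show ?thesis
    unfolding dom_e_def by simp
qed

lemma dom_e_eq_UNIV_times_if_Lipschitz_fst: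
  fixes h :: "'a::real_normed_vector \<times> 'b \<Rightarrow> ereal"
  assumes "\<forall>xs x z. h (x, xs) \<le> h (z, xs) + L * ereal (norm (x - z))" and "0 \<le> L" "L < \<infinity>"
  shows "dom_e h = UNIV \<times> snd ` dom_e h"
proof
  show "UNIV \<times> snd ` dom_e h \<subseteq> dom_e h"
  proof
    fix p :: "'a \<times> 'b" assume "p \<in> UNIV \<times> snd ` dom_e h"
    then obtain z where "(z, snd p) \<in> dom_e h"
      by force
    moreover have "h (fst p, snd p) \<le> h (z, snd p) + L * ereal (norm (fst p - z))"
      using assms(1) by blast
    ultimately have "(fst p, snd p) \<in> dom_e h"
      using dom_e_le_add_mult[where h = h, OF _ _ assms(2,3)] by blast
    then show "p \<in> dom_e h"
      by simp
  qed
qed force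

lemma dom_e_eq_times_UNIV_if_Lipschitz_snd:
  fixes h :: "'a \<times> 'b::real_normed_vector \<Rightarrow> ereal"
  assumes "\<forall>xs zs x. h (x, xs) \<le> h (x, zs) + L * ereal (norm (xs - zs))" and "0 \<le> L" "L < \<infinity>"
  shows "dom_e h = fst ` dom_e h \<times> UNIV"
proof
  show "fst ` dom_e h \<times> UNIV \<subseteq> dom_e h"
  proof
    fix p :: "'a \<times> 'b" assume "p \<in> fst ` dom_e h \<times> UNIV"
    then obtain z where "(fst p, z) \<in> dom_e h"
      by force
    moreover have "h (fst p, snd p) \<le> h (fst p, z) + L * ereal (norm (snd p - z))"
      using assms(1) by blast
    ultimately have "(fst p, snd p) \<in> dom_e h"
      using dom_e_le_add_mult[where h = h, OF _ _ assms(2,3)] by blast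
    then show "p \<in> dom_e h"
      by simp
  qed
qed force

theorem proposition3p5:
  fixes h :: "'a::banach \<times> ('a \<Rightarrow>\<^sub>L real) \<Rightarrow> ereal"
    and L :: ereal
  assumes "proper_e h" and "lsc_e h" and "convex_e h" and "0 \<le> L"
  shows
    "((\<forall>ys \<in> fst ` dom_e (conj_e h). ereal (norm ys) \<le> L) \<longrightarrow>
        (\<forall>xs x z. h (x, xs) \<le> h (z, xs) + L * ereal (norm (x - z))) \<and>
        (L < \<infinity> \<longrightarrow> dom_e h = UNIV \<times> (snd ` dom_e h)))
     \<and>
     ((\<forall>yss \<in> snd ` dom_e (conj_e h). ereal (norm yss) \<le> L) \<longrightarrow>
        (\<forall>xs zs x. h (x, xs) \<le> h (x, zs) + L * ereal (norm (xs - zs))) \<and>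
        (L < \<infinity> \<longrightarrow> dom_e h = (fst ` dom_e h) \<times> UNIV))"
proof (intro conjI impI)
  assume "\<forall>ys \<in> fst ` dom_e (conj_e h). ereal (norm ys) \<le> L"
  then show Lipschitz: "\<forall>xs x z. h (x, xs) \<le> h (z, xs) + L * ereal (norm (x - z))"
    using Lipschitz_fst_if_conj_dom_fst_bounded[OF assms] by blast
  show "L < \<infinity> \<Longrightarrow> dom_e h = UNIV \<times> snd ` dom_e h"
    using dom_e_eq_UNIV_times_if_Lipschitz_fst[OF Lipschitz \<open>0 \<le> L\<close>] .
next
  assume "\<forall>yss \<in> snd ` dom_e (conj_e h). ereal (norm yss) \<le> L"
  then show Lipschitz: "\<forall>xs zs x. h (x, xs) \<le> h (x, zs) + L * ereal (norm (xs - zs))"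
    using Lipschitz_snd_if_conj_dom_snd_bounded[OF assms] by blast
  show "L < \<infinity> \<Longrightarrow> dom_e h = fst ` dom_e h \<times> UNIV"
    using dom_e_eq_times_UNIV_if_Lipschitz_snd[OF Lipschitz \<open>0 \<le> L\<close>] .
qed

end
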